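(* Let $y\in\mathbb{R}^n$, $\beta,\gamma>0$, $d>0$, and $\rho_\gamma:=\|\cdot\|_1-\gamma\|\cdot\|_2+\iota_D$. Then: (i) If $\|y\|_\infty>\beta$, then, with $z:=\mathcal{S}(y,\beta)$, $\mathrm{prox}_{\beta\rho_\gamma}(y)$ is the singleton consisting of $\frac{z(\|z\|_2+\beta\gamma)}{\|z\|_2}$ if $\|z\|_2\le d-\beta\gamma$, and of $\frac{zd}{\|z\|_2}$ otherwise. (ii) If $\|y\|_\infty=\beta$, then $x^\star\in\mathrm{prox}_{\beta\rho_\gamma}(y)$ if and only if $\|x^\star\|_2=\min\{\beta\gamma,d\}$, $x^\star_i=0$ for all $i$ with $|y_i|<\beta$, and $x^\star_iy_i\ge0$ for all $i$ with $|y_i|=\beta$. (iii) If $(1-\gamma)\beta<\|y\|_\infty<\beta$, then $x^\star\in\mathrm{prox}_{\beta\rho_\gamma}(y)$ if and only if $x^\star$ has at most one nonzero entry, $\|x^\star\|_2=\min\{\|y\|_\infty+(\gamma-1)\beta,d\}$, $x^\star_iy_i\ge0$ for all $i$, and $x^\star_i=0$ for all $i$ with $|y_i|<\|y\|_\infty$. (iv) If $\|y\|_\infty\le(1-\gamma)\beta$, then $\mathrm{prox}_{\beta\rho_\gamma}(y)=\{0_n\}$.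
   Context: $D:=\{x\in\mathbb{R}^n:\|x\|_2\le d\}$ and $\iota_D$ is its indicator function ($0$ on $D$, $+\infty$ otherwise). For a function $\varphi:\mathbb{R}^n\to(-\infty,+\infty]$, $\mathrm{prox}_\varphi(x):=\arg\min\{\varphi(u)+\frac12\|u-x\|_2^2:u\in\mathbb{R}^n\}$ (a set). The soft-thresholding operator $\mathcal{S}(y,\alpha)$ acts componentwise: $\mathcal{S}(y,\alpha)_i=y_i-\alpha$ if $y_i>\alpha$, $0$ if $|y_i|\le\alpha$, $y_i+\alpha$ if $y_i<-\alpha$. *)

theory Defs
  imports "HOL-Analysis.Analysis" "HOL-Library.Extended_Real"
begin

definition norm1 :: "real^'n \<Rightarrow> real" where
  "norm1 x = (\<Sum>i\<in>UNIV. \<bar>x $ i\<bar>)"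

definition ball_D :: "real \<Rightarrow> (real^'n) set" where
  "ball_D d = {x. norm x \<le> d}"

definition indicator_fn :: "'a set \<Rightarrow> 'a \<Rightarrow> ereal" where
  "indicator_fn D x = (if x \<in> D then 0 else \<infinity>)"

definition prox :: "('a::real_normed_vector \<Rightarrow> ereal) \<Rightarrow> 'a \<Rightarrow> 'a set" where
  "prox \<phi> x = {u. \<forall>v. \<phi> u + ereal ((norm (u - x))\<^sup>2 / 2) \<le> \<phi> v + ereal ((norm (v - x))\<^sup>2 / 2)}"

definition rho :: "real \<Rightarrow> real \<Rightarrow> real^'n \<Rightarrow> ereal" where
  "rho \<gamma> d x = ereal (norm1 x - \<gamma> * norm x) + indicator_fn (ball_D d) x"

definition soft :: "real^'n \<Rightarrow> real \<Rightarrow> real^'n" where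
  "soft y \<alpha> = (\<chi> i. if y $ i > \<alpha> then y $ i - \<alpha>
                      else if \<bar>y $ i\<bar> \<le> \<alpha> then 0 else y $ i + \<alpha>)"

end

theory Submission
  imports Defs
begin

text \<open>On the ball \<open>norm x \<le> d\<close> the prox objective equals, up to the constant
\<open>(norm y)\<^sup>2/2\<close>, \<open>q x = \<beta> norm1 x - \<langle>x,y\<rangle> - \<beta>\<gamma> norm x + (norm x)\<^sup>2/2\<close>.
In each regime we split \<open>q x = A x + B x + h (norm x)\<close> with \<open>A, B \<ge> 0\<close> and
\<open>h t = t\<^sup>2/2 - a t\<close>. For \<open>m = infnorm y \<le> \<beta>\<close> take \<open>A x = m norm1 x - \<langle>x,y\<rangle>\<close> (Hoelder)
and \<open>B x = (\<beta> - m)(norm1 x - norm x)\<close>; for \<open>infnorm y > \<beta>\<close> and \<open>z = soft y \<beta>\<close> take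
\<open>A x = \<beta> norm1 x - \<langle>x,y-z\<rangle>\<close> (Hoelder again, as \<open>\<bar>y\<^sub>i - z\<^sub>i\<bar> \<le> \<beta>\<close>) and
\<open>B x = norm x norm z - \<langle>x,z\<rangle>\<close> (Cauchy-Schwarz). As soon as one point whose norm minimises \<open>h\<close>
on \<open>[0,d]\<close> annihilates \<open>A\<close> and \<open>B\<close>, the minimisers are exactly such points, and the equality
cases of Hoelder and Cauchy-Schwarz give the four descriptions.\<close>

lemma norm_le_norm1: "norm (x::real^'n) \<le> norm1 x"
  unfolding norm1_def by (rule norm_le_l1_cart)

lemma norm1_axis: "norm1 (axis k c :: real^'n) = \<bar>c\<bar>"
  unfolding norm1_def axis_def by (simp add: if_distrib[of abs] cong: if_cong)

lemma norm_axis: "norm (axis k c :: real^'n) = \<bar>c\<bar>"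
proof -
  have "axis k c = c *\<^sub>R (axis k 1 :: real^'n)" by (simp add: vec_eq_iff axis_def)
  then show ?thesis by simp
qed

lemma infnorm_attained: "\<exists>k. \<bar>(y::real^'n) $ k\<bar> = infnorm y"
proof -
  have "{\<bar>y $ i\<bar> |i. i \<in> UNIV} = range (\<lambda>i. \<bar>y $ i\<bar>)" by auto
  then have "infnorm y = Max (range (\<lambda>i. \<bar>y $ i\<bar>))"
    unfolding infnorm_cart by (simp add: cSup_eq_Max)
  moreover have "Max (range (\<lambda>i. \<bar>y $ i\<bar>)) \<in> range (\<lambda>i. \<bar>y $ i\<bar>)"
    by (rule Max_in) auto
  ultimately show ?thesis by (metis (no_types, lifting) imageE)
qed

lemma inner_le_bound_mult_norm1:
  fixes x y :: "real^'n"
  assumes "\<And>i. \<bar>y $ i\<bar> \<le> m"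
  shows "inner x y \<le> m * norm1 x"
    and "inner x y = m * norm1 x \<longleftrightarrow> (\<forall>i. x $ i * y $ i = m * \<bar>x $ i\<bar>)"
proof -
  have gap: "m * norm1 x - inner x y = (\<Sum>i\<in>UNIV. m * \<bar>x $ i\<bar> - x $ i * y $ i)"
    unfolding norm1_def inner_vec_def by (simp add: sum_subtractf sum_distrib_left)
  have summand: "x $ i * y $ i \<le> m * \<bar>x $ i\<bar>" for i
  proof -
    have "x $ i * y $ i \<le> \<bar>x $ i\<bar> * \<bar>y $ i\<bar>" by (metis abs_ge_self abs_mult)
    also have "\<dots> \<le> \<bar>x $ i\<bar> * m" using assms by (simp add: mult_left_mono)
    finally show ?thesis by (simp add: mult.commute)
  qed
  have "0 \<le> m * norm1 x - inner x y"
    unfolding gap by (rule sum_nonneg) (simp add: summand)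
  then show "inner x y \<le> m * norm1 x" by simp
  have "m * norm1 x - inner x y = 0 \<longleftrightarrow> (\<forall>i. m * \<bar>x $ i\<bar> - x $ i * y $ i = 0)"
    unfolding gap by (subst sum_nonneg_eq_0_iff) (simp_all add: summand)
  then show "inner x y = m * norm1 x \<longleftrightarrow> (\<forall>i. x $ i * y $ i = m * \<bar>x $ i\<bar>)"
    by auto
qed

lemma inner_eq_norm_mult_norm_imp_eq_scaleR:
  fixes x z :: "'a::real_inner"
  assumes "z \<noteq> 0" "inner x z = norm x * norm z"
  shows "x = (norm x / norm z) *\<^sub>R z"
proof -
  have "norm x *\<^sub>R z = norm z *\<^sub>R x" using assms(2) by (simp add: norm_cauchy_schwarz_eq)
  then have "x = (1 / norm z) *\<^sub>R (norm x *\<^sub>R z)" using assms(1) by simp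
  then show ?thesis by simp
qed

lemma mult_eq_bound_mult_abs_iff:
  fixes a b m :: real
  assumes "\<bar>b\<bar> \<le> m"
  shows "a * b = m * \<bar>a\<bar> \<longleftrightarrow> 0 \<le> a * b \<and> (\<bar>b\<bar> < m \<longrightarrow> a = 0)"
proof (cases "a = 0")
  case False
  have "0 \<le> m" using assms by linarith
  then have "a * b = m * \<bar>a\<bar> \<longleftrightarrow> 0 \<le> a * b \<and> \<bar>a * b\<bar> = \<bar>a\<bar> * m"
    by (auto simp: mult.commute)
  also have "\<bar>a * b\<bar> = \<bar>a\<bar> * m \<longleftrightarrow> \<bar>b\<bar> = m" using False by (simp add: abs_mult)
  finally show ?thesis using assms by auto
qed simp

lemma norm1_sq:
  "(norm1 x)\<^sup>2 = (norm x)\<^sup>2 + (\<Sum>i\<in>UNIV. \<Sum>j\<in>UNIV. if i = j then 0 else \<bar>(x::real^'n) $ i\<bar> * \<bar>x $ j\<bar>)"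
proof -
  have "(norm1 x)\<^sup>2 = (\<Sum>i\<in>UNIV. \<Sum>j\<in>UNIV. \<bar>x $ i\<bar> * \<bar>x $ j\<bar>)"
    unfolding norm1_def power2_eq_square by (rule sum_product)
  also have "\<dots> = (\<Sum>i\<in>UNIV. \<Sum>j\<in>UNIV. (if i = j then (x $ i)\<^sup>2 else 0)
      + (if i = j then 0 else \<bar>x $ i\<bar> * \<bar>x $ j\<bar>))"
    by (intro sum.cong refl) (auto simp: power2_eq_square abs_mult_self_eq)
  also have "\<dots> = (norm x)\<^sup>2 + (\<Sum>i\<in>UNIV. \<Sum>j\<in>UNIV. if i = j then 0 else \<bar>x $ i\<bar> * \<bar>x $ j\<bar>)"
    unfolding sum.distrib power2_norm_eq_inner inner_vec_def by (simp add: power2_eq_square)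
  finally show ?thesis .
qed

lemma norm1_eq_norm_iff: "norm1 (x::real^'n) = norm x \<longleftrightarrow> card {i. x $ i \<noteq> 0} \<le> 1"
proof -
  have "norm1 x = norm x \<longleftrightarrow> (norm1 x)\<^sup>2 = (norm x)\<^sup>2"
    using norm_le_norm1[of x] by (smt (verit) norm_ge_zero power2_eq_iff_nonneg)
  also have "\<dots> \<longleftrightarrow> (\<forall>i j. (if i = j then 0 else \<bar>x $ i\<bar> * \<bar>x $ j\<bar>) = (0::real))"
    unfolding norm1_sq by (simp add: sum_nonneg_eq_0_iff sum_nonneg)
  also have "\<dots> \<longleftrightarrow> card {i. x $ i \<noteq> 0} \<le> 1"
    by (subst One_nat_def, subst card_le_Suc0_iff_eq) auto
  finally show ?thesis .
qed

lemma quadratic_excess_ge: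
  fixes a d t :: real
  assumes "0 \<le> t" "t \<le> d"
  defines "s \<equiv> min (max a 0) d"
  shows "(t - s)\<^sup>2 / 2 \<le> (t\<^sup>2/2 - a * t) - (s\<^sup>2/2 - a * s)"
proof -
  have "0 \<le> (t - s) * (s - a)"
    using assms by (cases "a \<le> 0"; cases "a \<le> d") (auto simp: mult_le_0_iff zero_le_mult_iff)
  moreover have "(t\<^sup>2/2 - a * t) - (s\<^sup>2/2 - a * s) = (t - s)\<^sup>2 / 2 + (t - s) * (s - a)"
    by (simp add: power2_eq_square field_simps)
  ultimately show ?thesis by linarith
qed

lemma argmin_ball_decomposition:
  fixes q A B :: "'a::real_normed_vector \<Rightarrow> real"
  assumes "0 \<le> d"
    and q: "\<And>x. q x = A x + B x + ((norm x)\<^sup>2/2 - a * norm x)"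
    and A: "\<And>x. 0 \<le> A x" and B: "\<And>x. 0 \<le> B x"
  defines "s \<equiv> min (max a 0) d"
  assumes w: "A w = 0" "B w = 0" "norm w = s"
  shows "(norm x \<le> d \<and> (\<forall>v. norm v \<le> d \<longrightarrow> q x \<le> q v)) \<longleftrightarrow> norm x = s \<and> A x = 0 \<and> B x = 0"
proof -
  have s: "0 \<le> s" "s \<le> d" using \<open>0 \<le> d\<close> by (auto simp: s_def)
  have lower: "s\<^sup>2/2 - a * s + (norm v - s)\<^sup>2 / 2 \<le> q v" if "norm v \<le> d" for v
    using quadratic_excess_ge[OF norm_ge_zero that, where a=a] q[of v] A[of v] B[of v] unfolding s_def by linarith
  have qw: "q w = s\<^sup>2/2 - a * s" using q[of w] w by simp
  show ?thesis
  proof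
    assume min: "norm x \<le> d \<and> (\<forall>v. norm v \<le> d \<longrightarrow> q x \<le> q v)"
    then have "q x \<le> s\<^sup>2/2 - a * s" using qw w(3) s(2) by auto
    with lower[of x] min have "(norm x - s)\<^sup>2 \<le> 0" by linarith
    then have "norm x = s" by simp
    with \<open>q x \<le> s\<^sup>2/2 - a * s\<close> show "norm x = s \<and> A x = 0 \<and> B x = 0"
      using q[of x] A[of x] B[of x] by simp
  next
    assume "norm x = s \<and> A x = 0 \<and> B x = 0"
    then have "norm x \<le> d" "q x = s\<^sup>2/2 - a * s" using q[of x] s by auto
    moreover have "s\<^sup>2/2 - a * s \<le> q v" if "norm v \<le> d" for v
      using lower[OF that] zero_le_power2[of "norm v - s"] by linarith
    ultimately show "norm x \<le> d \<and> (\<forall>v. norm v \<le> d \<longrightarrow> q x \<le> q v)" by simp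
  qed
qed

definition prox_obj :: "real \<Rightarrow> real \<Rightarrow> real^'n \<Rightarrow> real^'n \<Rightarrow> real" where
  "prox_obj \<beta> \<gamma> y x = \<beta> * norm1 x - inner x y - \<beta> * \<gamma> * norm x + (norm x)\<^sup>2 / 2"

lemma prox_rho_iff_argmin:
  fixes y :: "real^'n"
  assumes "0 < \<beta>" "0 \<le> d"
  shows "x \<in> prox (\<lambda>x. ereal \<beta> * rho \<gamma> d x) y \<longleftrightarrow>
     norm x \<le> d \<and> (\<forall>v. norm v \<le> d \<longrightarrow> prox_obj \<beta> \<gamma> y x \<le> prox_obj \<beta> \<gamma> y v)"
proof -
  have "(norm (v - y))\<^sup>2 / 2 = (norm v)\<^sup>2/2 - inner v y + (norm y)\<^sup>2/2" for v :: "real^'n"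
    by (simp add: power2_norm_eq_inner inner_diff inner_commute field_simps)
  then have obj: "ereal \<beta> * rho \<gamma> d v + ereal ((norm (v - y))\<^sup>2 / 2) =
      (if norm v \<le> d then ereal (prox_obj \<beta> \<gamma> y v + (norm y)\<^sup>2/2) else \<infinity>)" for v
    using \<open>0 < \<beta>\<close> by (auto simp: rho_def indicator_fn_def ball_D_def prox_obj_def algebra_simps)
  have zero: "norm (0::real^'n) \<le> d" using \<open>0 \<le> d\<close> by simp
  show ?thesis
    unfolding prox_def obj by (auto split: if_splits) (use zero in blast)
qed

lemma soft_residual_le: "0 \<le> \<beta> \<Longrightarrow> \<bar>(y - soft y \<beta>) $ i\<bar> \<le> \<beta>"
  by (auto simp: soft_def)

lemma soft_mult_residual: "soft y \<beta> $ i * (y - soft y \<beta>) $ i = \<beta> * \<bar>soft y \<beta> $ i\<bar>"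
  by (auto simp: soft_def algebra_simps)

lemma soft_nonzero:
  fixes y :: "real^'n"
  assumes "\<beta> < infnorm y"
  shows "soft y \<beta> \<noteq> 0"
proof -
  obtain k where "\<bar>y $ k\<bar> = infnorm y" using infnorm_attained by blast
  then have "soft y \<beta> $ k \<noteq> 0" using assms by (auto simp: soft_def)
  then show ?thesis by auto
qed

lemma prox_rho_infnorm_le:
  fixes y :: "real^'n"
  assumes "0 < \<beta>" "0 \<le> d" "infnorm y \<le> \<beta>"
  shows "x \<in> prox (\<lambda>x. ereal \<beta> * rho \<gamma> d x) y \<longleftrightarrow>
    norm x = min (max (infnorm y + (\<gamma> - 1) * \<beta>) 0) d
    \<and> (\<forall>i. 0 \<le> x $ i * y $ i) \<and> (\<forall>i. \<bar>y $ i\<bar> < infnorm y \<longrightarrow> x $ i = 0)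
    \<and> (\<beta> - infnorm y) * (norm1 x - norm x) = 0"
proof -
  define m where "m = infnorm y"
  define ts where "ts = min (max (m + (\<gamma> - 1) * \<beta>) 0) d"
  have ym: "\<bar>y $ i\<bar> \<le> m" for i unfolding m_def by (rule component_le_infnorm_cart)
  obtain k where k: "\<bar>y $ k\<bar> = m" using infnorm_attained m_def by blast
  define \<sigma> where "\<sigma> = (if 0 \<le> y $ k then 1 else -1 :: real)"
  define w :: "real^'n" where "w = axis k (\<sigma> * ts)"
  have "0 \<le> ts" "\<bar>\<sigma>\<bar> = 1" "\<sigma> * y $ k = m"
    using \<open>0 \<le> d\<close> k by (auto simp: ts_def \<sigma>_def)
  then have w: "norm w = ts" "norm1 w = ts" "inner w y = m * ts"
    unfolding w_def norm_axis norm1_axis inner_axis' by (auto simp: abs_mult algebra_simps)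
  have "prox_obj \<beta> \<gamma> y v = (m * norm1 v - inner v y) + (\<beta> - m) * (norm1 v - norm v)
      + ((norm v)\<^sup>2/2 - (m + (\<gamma> - 1) * \<beta>) * norm v)" for v
    unfolding prox_obj_def by (simp add: algebra_simps)
  moreover have "0 \<le> m * norm1 v - inner v y" for v
    using inner_le_bound_mult_norm1(1)[OF ym] by simp
  moreover have "0 \<le> (\<beta> - m) * (norm1 v - norm v)" for v
    using assms(3) norm_le_norm1[of v] by (simp add: m_def)
  ultimately have "x \<in> prox (\<lambda>x. ereal \<beta> * rho \<gamma> d x) y \<longleftrightarrow>
      norm x = ts \<and> m * norm1 x - inner x y = 0 \<and> (\<beta> - m) * (norm1 x - norm x) = 0"
    using w \<open>0 \<le> d\<close> unfolding prox_rho_iff_argmin[OF assms(1,2)] ts_def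
    by (intro argmin_ball_decomposition[where A = "\<lambda>v. m * norm1 v - inner v y"
          and B = "\<lambda>v. (\<beta> - m) * (norm1 v - norm v)" and w = w]) auto
  also have "m * norm1 x - inner x y = 0 \<longleftrightarrow>
      (\<forall>i. 0 \<le> x $ i * y $ i) \<and> (\<forall>i. \<bar>y $ i\<bar> < m \<longrightarrow> x $ i = 0)"
    using inner_le_bound_mult_norm1(2)[OF ym, of x] mult_eq_bound_mult_abs_iff[OF ym]
    by auto
  finally show ?thesis unfolding m_def ts_def by (simp only: conj_assoc)
qed

lemma prox_rho_infnorm_gt:
  fixes y :: "real^'n"
  assumes "0 < \<beta>" "0 \<le> \<gamma>" "0 \<le> d" "\<beta> < infnorm y"
  defines "z \<equiv> soft y \<beta>"
  shows "prox (\<lambda>x. ereal \<beta> * rho \<gamma> d x) y = {(min (norm z + \<beta> * \<gamma>) d / norm z) *\<^sub>R z}"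
proof -
  have "0 < norm z" using soft_nonzero[OF assms(4)] by (simp add: z_def)
  define a where "a = norm z + \<beta> * \<gamma>"
  define ts where "ts = min (max a 0) d"
  define w where "w = (ts / norm z) *\<^sub>R z"
  have "0 \<le> ts" "ts = min a d"
    using \<open>0 < norm z\<close> assms(1-3) by (auto simp: ts_def a_def)
  have residual: "\<bar>(y - z) $ i\<bar> \<le> \<beta>" "z $ i * (y - z) $ i = \<beta> * \<bar>z $ i\<bar>" for i
    using soft_residual_le[of \<beta> y] assms(1) soft_mult_residual by (simp_all add: z_def)
  have "prox_obj \<beta> \<gamma> y v = (\<beta> * norm1 v - inner v (y - z)) + (norm v * norm z - inner v z)
      + ((norm v)\<^sup>2/2 - a * norm v)" for v
    unfolding prox_obj_def a_def by (simp add: inner_diff_right algebra_simps)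
  moreover have "0 \<le> \<beta> * norm1 v - inner v (y - z)" for v
    using inner_le_bound_mult_norm1(1)[OF residual(1)] by simp
  moreover have "0 \<le> norm v * norm z - inner v z" for v
    using norm_cauchy_schwarz[of v z] by simp
  moreover have "inner w (y - z) = \<beta> * norm1 w"
    using residual(2) \<open>0 \<le> ts\<close>
    by (subst inner_le_bound_mult_norm1(2)[OF residual(1)]) (simp add: w_def abs_mult)
  moreover have "norm w = ts" "inner w z = norm w * norm z"
    using \<open>0 < norm z\<close> \<open>0 \<le> ts\<close> by (simp_all add: w_def power2_norm_eq_inner[symmetric] power2_eq_square)
  ultimately have prox_iff: "x \<in> prox (\<lambda>x. ereal \<beta> * rho \<gamma> d x) y \<longleftrightarrow>
      norm x = ts \<and> \<beta> * norm1 x - inner x (y - z) = 0 \<and> norm x * norm z - inner x z = 0" for x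
    using \<open>0 \<le> d\<close> unfolding prox_rho_iff_argmin[OF assms(1,3)] ts_def
    by (intro argmin_ball_decomposition[where A = "\<lambda>v. \<beta> * norm1 v - inner v (y - z)"
          and B = "\<lambda>v. norm v * norm z - inner v z" and w = w]) auto
  have "x \<in> prox (\<lambda>x. ereal \<beta> * rho \<gamma> d x) y \<longleftrightarrow> x = w" for x
  proof
    assume "x \<in> prox (\<lambda>x. ereal \<beta> * rho \<gamma> d x) y"
    then have "norm x = ts" "inner x z = norm x * norm z" using prox_iff by auto
    then show "x = w"
      using inner_eq_norm_mult_norm_imp_eq_scaleR[of z x] \<open>0 < norm z\<close> by (simp add: w_def)
  next
    assume "x = w"
    then show "x \<in> prox (\<lambda>x. ereal \<beta> * rho \<gamma> d x) y"
      using prox_iff \<open>norm w = ts\<close> \<open>inner w z = norm w * norm z\<close> \<open>inner w (y - z) = \<beta> * norm1 w\<close>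
      by simp
  qed
  then show ?thesis using \<open>ts = min a d\<close> by (auto simp: w_def a_def)
qed

lemma prox_rho_infnorm_eq:
  fixes y :: "real^'n"
  assumes "0 < \<beta>" "0 \<le> \<gamma>" "0 \<le> d" "infnorm y = \<beta>"
  shows "x \<in> prox (\<lambda>x. ereal \<beta> * rho \<gamma> d x) y \<longleftrightarrow>
    norm x = min (\<beta> * \<gamma>) d \<and> (\<forall>i. \<bar>y $ i\<bar> < \<beta> \<longrightarrow> x $ i = 0)
    \<and> (\<forall>i. \<bar>y $ i\<bar> = \<beta> \<longrightarrow> 0 \<le> x $ i * y $ i)"
proof -
  have "\<bar>y $ i\<bar> \<le> \<beta>" for i using component_le_infnorm_cart[of y i] assms(4) by simp
  moreover have "max (infnorm y + (\<gamma> - 1) * \<beta>) 0 = \<beta> * \<gamma>"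
    using assms by (simp add: algebra_simps)
  ultimately show ?thesis
    unfolding prox_rho_infnorm_le[OF assms(1,3) eq_refl[OF assms(4)]] using assms(4)
    by (fastforce simp: order_le_less)
qed

lemma prox_rho_infnorm_between:
  fixes y :: "real^'n"
  assumes "0 < \<beta>" "0 \<le> d" "(1 - \<gamma>) * \<beta> < infnorm y" "infnorm y < \<beta>"
  shows "x \<in> prox (\<lambda>x. ereal \<beta> * rho \<gamma> d x) y \<longleftrightarrow>
    card {i. x $ i \<noteq> 0} \<le> 1 \<and> norm x = min (infnorm y + (\<gamma> - 1) * \<beta>) d
    \<and> (\<forall>i. 0 \<le> x $ i * y $ i) \<and> (\<forall>i. \<bar>y $ i\<bar> < infnorm y \<longrightarrow> x $ i = 0)"
proof -
  have "max (infnorm y + (\<gamma> - 1) * \<beta>) 0 = infnorm y + (\<gamma> - 1) * \<beta>"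
    using assms(3) by (simp add: algebra_simps)
  moreover have "(\<beta> - infnorm y) * (norm1 x - norm x) = 0 \<longleftrightarrow> card {i. x $ i \<noteq> 0} \<le> 1"
    using assms(4) norm1_eq_norm_iff[of x] by simp
  ultimately show ?thesis
    unfolding prox_rho_infnorm_le[OF assms(1,2) less_imp_le[OF assms(4)]] by auto
qed

lemma prox_rho_infnorm_small:
  fixes y :: "real^'n"
  assumes "0 < \<beta>" "0 \<le> \<gamma>" "0 \<le> d" "infnorm y \<le> (1 - \<gamma>) * \<beta>"
  shows "prox (\<lambda>x. ereal \<beta> * rho \<gamma> d x) y = {0}"
proof -
  have "0 \<le> \<beta> * \<gamma>" using assms(1,2) by simp
  then have "infnorm y \<le> \<beta>" "max (infnorm y + (\<gamma> - 1) * \<beta>) 0 = 0"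
    using assms(4) by (simp_all add: algebra_simps)
  then show ?thesis
    using prox_rho_infnorm_le[OF assms(1,3), of y] assms(3) by (auto simp: norm1_def)
qed

theorem mainTheorem6:
  fixes y :: "real^'n" and \<beta> \<gamma> d :: real
  assumes "\<beta> > 0" and "\<gamma> > 0" and "d > 0"
  defines "P \<equiv> prox (\<lambda>x. ereal \<beta> * rho \<gamma> d x) y"
  shows
    "(infnorm y > \<beta> \<longrightarrow>
       (let z = (soft y \<beta> :: real^'n) in
          P = {if norm z \<le> d - \<beta> * \<gamma> then ((norm z + \<beta> * \<gamma>) / norm z) *\<^sub>R z
               else (d / norm z) *\<^sub>R z}))
   \<and> (infnorm y = \<beta> \<longrightarrow>
       (\<forall>xs. xs \<in> P \<longleftrightarrow>
          norm xs = min (\<beta> * \<gamma>) d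
          \<and> (\<forall>i. \<bar>y $ i\<bar> < \<beta> \<longrightarrow> xs $ i = 0)
          \<and> (\<forall>i. \<bar>y $ i\<bar> = \<beta> \<longrightarrow> xs $ i * y $ i \<ge> 0)))
   \<and> ((1 - \<gamma>) * \<beta> < infnorm y \<and> infnorm y < \<beta> \<longrightarrow>
       (\<forall>xs. xs \<in> P \<longleftrightarrow>
          card {i. xs $ i \<noteq> 0} \<le> 1
          \<and> norm xs = min (infnorm y + (\<gamma> - 1) * \<beta>) d
          \<and> (\<forall>i. xs $ i * y $ i \<ge> 0)
          \<and> (\<forall>i. \<bar>y $ i\<bar> < infnorm y \<longrightarrow> xs $ i = 0)))
   \<and> (infnorm y \<le> (1 - \<gamma>) * \<beta> \<longrightarrow> P = {0})"
proof (intro conjI impI allI)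
  have "0 \<le> \<gamma>" "0 \<le> d" using assms by simp_all
  note gt = prox_rho_infnorm_gt[OF \<open>\<beta> > 0\<close> this]
    and eq = prox_rho_infnorm_eq[OF \<open>\<beta> > 0\<close> this]
    and small = prox_rho_infnorm_small[OF \<open>\<beta> > 0\<close> this]
  show "let z = soft y \<beta> in P = {if norm z \<le> d - \<beta> * \<gamma> then ((norm z + \<beta> * \<gamma>) / norm z) *\<^sub>R z
      else (d / norm z) *\<^sub>R z}" if "infnorm y > \<beta>"
    using gt[OF that] by (auto simp: P_def Let_def min_def)
  show "xs \<in> P \<longleftrightarrow> norm xs = min (\<beta> * \<gamma>) d \<and> (\<forall>i. \<bar>y $ i\<bar> < \<beta> \<longrightarrow> xs $ i = 0)
      \<and> (\<forall>i. \<bar>y $ i\<bar> = \<beta> \<longrightarrow> xs $ i * y $ i \<ge> 0)" if "infnorm y = \<beta>" for xs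
    unfolding P_def using eq[OF that] .
  show "xs \<in> P \<longleftrightarrow> card {i. xs $ i \<noteq> 0} \<le> 1 \<and> norm xs = min (infnorm y + (\<gamma> - 1) * \<beta>) d
      \<and> (\<forall>i. xs $ i * y $ i \<ge> 0) \<and> (\<forall>i. \<bar>y $ i\<bar> < infnorm y \<longrightarrow> xs $ i = 0)"
    if "(1 - \<gamma>) * \<beta> < infnorm y \<and> infnorm y < \<beta>" for xs
    unfolding P_def using prox_rho_infnorm_between[OF \<open>\<beta> > 0\<close> \<open>0 \<le> d\<close>] that by blast
  show "P = {0}" if "infnorm y \<le> (1 - \<gamma>) * \<beta>"
    unfolding P_def using small[OF that] .
qed

end
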